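(* In the linear deterministic diamond network with a disturbing node with gains $n_1,n_2,n_3,n_4,m$, suppose $n_1>n_2$, $n_3\ge n_4$ and $m\le n_1$. Then the linear capacity is $$C=\min\big(n_1-m+\min(m,n_4),\ n_3\big).$$
   Context: The shift matrix $Q$ is the $q\times q$ matrix over $\mathbb{F}_2$ with $Q_{i+1,i}=1$ for $1\le i\le q-1$ and all other entries $0$, where $q=\max(n_1,n_2,n_3,n_4,m)$ and all gains are nonnegative integers. Network: source $S$, relays $A,B$, destination $D$, disturbing node $M$; gains $n_1$ ($S\to A$), $n_2$ ($S\to B$), $n_3$ ($A\to D$), $n_4$ ($B\to D$), $m$ ($M\to A$ and $M\to B$). Each node transmits $x_i\in\mathbb{F}_2^q$ and receives $y_j=\sum_{k:(k,j)\text{ an edge}}Q^{q-n_{(k,j)}}x_k$; relays use linear maps $x_A=G_Ay_A$, $x_B=G_By_B$ with $G_A,G_B$ arbitrary $q\times q$ matrices over $\mathbb{F}_2$. Then $y_D=G_Sx_S+G_Mx_M$ with $G_S=Q^{q-n_3}G_AQ^{q-n_1}+Q^{q-n_4}G_BQ^{q-n_2}$ and $G_M=Q^{q-n_3}G_AQ^{q-m}+Q^{q-n_4}G_BQ^{q-m}$. The rate $R(G_A,G_B)$ is the maximum dimension of a subspace $\mathcal{X}\subseteq\mathbb{F}_2^q$ such that for all $x_S,x_S'\in\mathcal{X}$, $x_M,x_M'\in\mathbb{F}_2^q$, $G_Sx_S+G_Mx_M=G_Sx_S'+G_Mx_M'$ implies $x_S=x_S'$. The linear capacity is $C=\max_{G_A,G_B}R(G_A,G_B)$.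 *)

theory Defs
  imports "HOL-Library.Z2" "Jordan_Normal_Form.VS_Connect"
begin

text \<open>Vectors and matrices are those of
  Jordan_Normal_Form; indices are 0-based, so the shift matrix Q has
  Q(i+1,i) = 1 for 0 <= i < q-1 and all other entries 0.\<close>

definition net_q :: "nat \<Rightarrow> nat \<Rightarrow> nat \<Rightarrow> nat \<Rightarrow> nat \<Rightarrow> nat" where
  "net_q n1 n2 n3 n4 m = max n1 (max n2 (max n3 (max n4 m)))"

definition shift_mat :: "nat \<Rightarrow> bit mat" where
  "shift_mat q = mat q q (\<lambda>(i, j). if i = j + 1 then 1 else 0)"

definition chan :: "nat \<Rightarrow> nat \<Rightarrow> bit mat" where
  "chan q n = shift_mat q ^\<^sub>m (q - n)"

definition G_S :: "nat \<Rightarrow> nat \<Rightarrow> nat \<Rightarrow> nat \<Rightarrow> nat \<Rightarrow> bit mat \<Rightarrow> bit mat \<Rightarrow> bit mat" where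
  "G_S n1 n2 n3 n4 m GA GB =
     (let q = net_q n1 n2 n3 n4 m in
      chan q n3 * GA * chan q n1 + chan q n4 * GB * chan q n2)"

definition G_M :: "nat \<Rightarrow> nat \<Rightarrow> nat \<Rightarrow> nat \<Rightarrow> nat \<Rightarrow> bit mat \<Rightarrow> bit mat \<Rightarrow> bit mat" where
  "G_M n1 n2 n3 n4 m GA GB =
     (let q = net_q n1 n2 n3 n4 m in
      chan q n3 * GA * chan q m + chan q n4 * GB * chan q m)"

definition decodable :: "nat \<Rightarrow> bit mat \<Rightarrow> bit mat \<Rightarrow> bit vec set \<Rightarrow> bool" where
  "decodable q GS GM X \<longleftrightarrow>
     (\<forall>xS \<in> X. \<forall>xS' \<in> X. \<forall>xM \<in> carrier_vec q. \<forall>xM' \<in> carrier_vec q.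
        GS *\<^sub>v xS + GM *\<^sub>v xM = GS *\<^sub>v xS' + GM *\<^sub>v xM' \<longrightarrow> xS = xS')"

definition achievable_dims :: "nat \<Rightarrow> nat \<Rightarrow> nat \<Rightarrow> nat \<Rightarrow> nat \<Rightarrow> bit mat \<Rightarrow> bit mat \<Rightarrow> nat set" where
  "achievable_dims n1 n2 n3 n4 m GA GB =
     (let q = net_q n1 n2 n3 n4 m in
      {d. \<exists>X. VectorSpace.subspace class_ring X (module_vec TYPE(bit) q) \<and>
             vectorspace.dim class_ring ((module_vec TYPE(bit) q)\<lparr>carrier := X\<rparr>) = d \<and>
             decodable q (G_S n1 n2 n3 n4 m GA GB) (G_M n1 n2 n3 n4 m GA GB) X})"

definition rate :: "nat \<Rightarrow> nat \<Rightarrow> nat \<Rightarrow> nat \<Rightarrow> nat \<Rightarrow> bit mat \<Rightarrow> bit mat \<Rightarrow> nat" where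
  "rate n1 n2 n3 n4 m GA GB = Max (achievable_dims n1 n2 n3 n4 m GA GB)"

definition linear_capacity :: "nat \<Rightarrow> nat \<Rightarrow> nat \<Rightarrow> nat \<Rightarrow> nat \<Rightarrow> nat" where
  "linear_capacity n1 n2 n3 n4 m =
     (let q = net_q n1 n2 n3 n4 m in
      Max {rate n1 n2 n3 n4 m GA GB | GA GB. GA \<in> carrier_mat q q \<and> GB \<in> carrier_mat q q})"

end

theory Submission
  imports Defs
begin

text \<open>
  A decodable subspace X of F_2^q has 2^(dim X) elements. With x_M = 0 the
  destination output lies in the top n3 levels and determines x_S, so dim X \<le> n3. Let W be the
  subspace of codewords whose first n1 - m entries vanish; since the fibres of the projection
  onto these entries are cosets of W, |X| \<le> 2^(n1 - m) |W|. Relay A sees only the first n1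
  entries of x_S, so |W| \<le> 2^m; and for x_S \<in> W the disturbing node can send a shifted copy of
  x_S that cancels the whole signal at relay A, leaving only the n4 levels of the link B \<rightarrow> D,
  so |W| \<le> 2^n4.

  The source uses its first B = min (n1 - m + min m n4) n3 entries. Relay A
  forwards them to D; relay B forwards exactly those levels at which the disturbance enters
  relay A, so that over F_2 the disturbance cancels at D and x_S reaches D through a unit lower
  triangular map.

  Entry j of a vector is its level j; a link of gain n delivers the first n entries of its
  input to the top n levels q - n, ..., q - 1 of its output.
\<close>

section \<open>Vectors over F_2 and their count\<close>

lemma card_UNIV_bit: "card (UNIV :: bit set) = 2"
  using card_2_iff' by force

lemma finite_UNIV_bit: "finite (UNIV :: bit set)"
  by (rule card_ge_0_finite) (simp add: card_UNIV_bit)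

lemma add_self_vec_bit: "v + v = 0\<^sub>v (dim_vec v)" for v :: "bit vec"
  by (intro eq_vecI) simp_all

lemma bit_add_add_cancel: "(a + c) + (d + c) = a + d" for a c d :: bit
  by (cases a; cases c; cases d) simp_all

lemma (in vectorspace) finite_carrier_imp_fin_dim:
  assumes "finite (carrier V)"
  shows "fin_dim"
proof -
  have "span (carrier V) = carrier V"
    using span_is_subset2[OF subset_refl] in_own_span[OF subset_refl] by (rule subset_antisym)
  then show ?thesis
    unfolding fin_dim_def using assms by blast
qed

lemma (in vectorspace) card_carrier_eq_pow_dim:
  assumes "finite (carrier V)" "finite (carrier K)"
  shows "card (carrier V) = card (carrier K) ^ dim"
proof -
  obtain A where A: "finite A" "basis A"
    using finite_basis_exists[OF finite_carrier_imp_fin_dim[OF assms(1)]] by blast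
  then have AV: "A \<subseteq> carrier V" unfolding basis_def by blast
  have unique: "\<forall>v. v \<in> carrier V \<longrightarrow> (\<exists>!a. a \<in> A \<rightarrow>\<^sub>E carrier K \<and> lincomb a A = v)"
    using basis_criterion[OF A(1) AV] A(2) by simp
  have closed: "lincomb a A \<in> carrier V" if "a \<in> A \<rightarrow>\<^sub>E carrier K" for a
    using that by (intro lincomb_closed[OF AV]) (simp add: PiE_iff)
  have "bij_betw (\<lambda>a. lincomb a A) (A \<rightarrow>\<^sub>E carrier K) (carrier V)"
  proof (rule bij_betwI')
    show "(lincomb a A = lincomb b A) = (a = b)"
      if "a \<in> A \<rightarrow>\<^sub>E carrier K" "b \<in> A \<rightarrow>\<^sub>E carrier K" for a b
      using unique closed[OF that(1)] that by metis
    show "\<exists>a \<in> A \<rightarrow>\<^sub>E carrier K. v = lincomb a A" if "v \<in> carrier V" for v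
      using unique that by metis
  qed (rule closed)
  then have "card (carrier V) = card (A \<rightarrow>\<^sub>E carrier K)"
    by (rule bij_betw_same_card[symmetric])
  also have "\<dots> = card (carrier K) ^ card A"
    using A(1) by (simp add: card_PiE)
  also have "card A = dim"
    by (rule dim_basis[OF A, symmetric])
  finally show ?thesis .
qed

definition supported_vecs :: "nat \<Rightarrow> nat set \<Rightarrow> 'a :: zero vec set" where
  "supported_vecs q S = {v \<in> carrier_vec q. \<forall>i<q. i \<notin> S \<longrightarrow> v $ i = 0}"

lemma card_supported_vecs:
  assumes "finite (UNIV :: 'a set)" "S \<subseteq> {..<q}"
  shows "card (supported_vecs q S :: 'a :: zero vec set) = card (UNIV :: 'a set) ^ card S"
proof -
  have "bij_betw (\<lambda>v. restrict (\<lambda>i. v $ i) S) (supported_vecs q S :: 'a vec set) (S \<rightarrow>\<^sub>E UNIV)"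
  proof (rule bij_betw_byWitness[where f' = "\<lambda>f. vec q (\<lambda>i. if i \<in> S then f i else 0)"])
    show "\<forall>v \<in> supported_vecs q S. vec q (\<lambda>i. if i \<in> S then restrict (\<lambda>i. v $ i) S i else 0) = v"
      by (auto simp: supported_vecs_def intro!: eq_vecI)
    show "\<forall>f \<in> S \<rightarrow>\<^sub>E UNIV. restrict (\<lambda>i. vec q (\<lambda>i. if i \<in> S then f i else 0) $ i) S = f"
      using assms(2) by (auto simp: PiE_iff extensional_def fun_eq_iff)
    show "(\<lambda>v. restrict (\<lambda>i. v $ i) S) ` supported_vecs q S \<subseteq> S \<rightarrow>\<^sub>E UNIV"
      by auto
    show "(\<lambda>f. vec q (\<lambda>i. if i \<in> S then f i else 0)) ` (S \<rightarrow>\<^sub>E UNIV) \<subseteq> supported_vecs q S"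
      by (auto simp: supported_vecs_def)
  qed
  then have "card (supported_vecs q S :: 'a vec set) = card (S \<rightarrow>\<^sub>E (UNIV :: 'a set))"
    by (rule bij_betw_same_card)
  also have "\<dots> = card (UNIV :: 'a set) ^ card S"
    using finite_subset[OF assms(2)] by (simp add: card_PiE)
  finally show ?thesis .
qed

lemma carrier_vec_eq_supported_vecs: "carrier_vec q = supported_vecs q {..<q}"
  by (auto simp: supported_vecs_def)

lemma finite_supported_vecs:
  assumes "finite (UNIV :: 'a set)"
  shows "finite (supported_vecs q S :: 'a :: zero vec set)"
proof -
  have "supported_vecs q S = (supported_vecs q (S \<inter> {..<q}) :: 'a vec set)"
    by (auto simp: supported_vecs_def)
  moreover have "card (supported_vecs q (S \<inter> {..<q}) :: 'a vec set) > 0"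
    using assms by (simp add: card_supported_vecs finite_UNIV_card_ge_0)
  ultimately show ?thesis by (metis card_ge_0_finite)
qed

lemma finite_carrier_vec_bit: "finite (carrier_vec q :: bit vec set)"
  unfolding carrier_vec_eq_supported_vecs by (rule finite_supported_vecs[OF finite_UNIV_bit])

lemma card_subspace_vec:
  fixes X :: "'a :: field vec set"
  assumes "finite (UNIV :: 'a set)" "subspace class_ring X (module_vec TYPE('a) q)"
  shows "card X = card (UNIV :: 'a set) ^ vectorspace.dim class_ring ((module_vec TYPE('a) q)\<lparr>carrier := X\<rparr>)"
proof -
  interpret V: vec_space "TYPE('a)" q .
  have "X \<subseteq> carrier_vec q"
    using assms(2) by (simp add: subspace_def submodule_def)
  then have "finite X"
    using finite_supported_vecs[OF assms(1)] carrier_vec_eq_supported_vecs by (metis finite_subset)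
  have carrier_X: "carrier ((module_vec TYPE('a) q)\<lparr>carrier := X\<rparr>) = X" by simp
  have carrier_K: "carrier (class_ring :: 'a ring) = UNIV" by simp
  show ?thesis
    by (rule vectorspace.card_carrier_eq_pow_dim[OF V.subspace_is_vs[OF assms(2)],
          unfolded carrier_X carrier_K, OF \<open>finite X\<close> assms(1)])
qed

lemma card_subspace_vec_bit:
  assumes "subspace class_ring X (module_vec TYPE(bit) q)"
  shows "card X = 2 ^ vectorspace.dim class_ring ((module_vec TYPE(bit) q)\<lparr>carrier := X\<rparr>)"
  using card_subspace_vec[OF finite_UNIV_bit assms] card_UNIV_bit by simp

lemma supported_vecs_subspace:
  "subspace class_ring (supported_vecs q S) (module_vec TYPE('a :: field) q)"
  unfolding subspace_def submodule_def
proof (intro conjI ballI allI impI)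
  show "supported_vecs q S \<subseteq> carrier (module_vec TYPE('a) q)"
    by (auto simp: supported_vecs_def module_vec_simps)
  show "\<zero>\<^bsub>module_vec TYPE('a) q\<^esub> \<in> supported_vecs q S"
    by (auto simp: supported_vecs_def module_vec_simps)
  show "v \<oplus>\<^bsub>module_vec TYPE('a) q\<^esub> w \<in> supported_vecs q S"
    if "v \<in> supported_vecs q S" "w \<in> supported_vecs q S" for v w
    using that by (auto simp: supported_vecs_def module_vec_simps)
  show "c \<odot>\<^bsub>module_vec TYPE('a) q\<^esub> v \<in> supported_vecs q S"
    if "c \<in> carrier class_ring" "v \<in> supported_vecs q S" for c v
    using that by (auto simp: supported_vecs_def module_vec_simps)
qed (rule vec_vs, rule vec_module)

lemma dim_supported_vecs_bit:
  assumes "S \<subseteq> {..<q}"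
  shows "vectorspace.dim class_ring ((module_vec TYPE(bit) q)\<lparr>carrier := supported_vecs q S\<rparr>) = card S"
proof -
  have "(2::nat) ^ vectorspace.dim class_ring ((module_vec TYPE(bit) q)\<lparr>carrier := supported_vecs q S\<rparr>)
      = 2 ^ card S"
    using card_subspace_vec_bit[OF supported_vecs_subspace]
      card_supported_vecs[OF finite_UNIV_bit assms] card_UNIV_bit by simp
  then show ?thesis by simp
qed

lemma card_le_if_inj_on_supported_vecs:
  fixes f :: "'b \<Rightarrow> bit vec"
  assumes "inj_on f X" "f ` X \<subseteq> supported_vecs q S" "S \<subseteq> {..<q}"
  shows "card X \<le> 2 ^ card S"
  using card_inj_on_le[OF assms(1,2) finite_supported_vecs[OF finite_UNIV_bit]]
    card_supported_vecs[OF finite_UNIV_bit assms(3)] card_UNIV_bit by simp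

definition truncate_vec :: "nat \<Rightarrow> 'a :: zero vec \<Rightarrow> 'a vec" where
  "truncate_vec k x = vec (dim_vec x) (\<lambda>i. if i < k then x $ i else 0)"

lemma card_truncate_vec_fibre_le:
  fixes X :: "bit vec set"
  assumes X: "X \<subseteq> carrier_vec q" and add: "\<And>x y. x \<in> X \<Longrightarrow> y \<in> X \<Longrightarrow> x + y \<in> X"
    and "k \<le> q" and x0: "x0 \<in> X"
  shows "card {x \<in> X. truncate_vec k x = truncate_vec k x0} \<le> card {x \<in> X. \<forall>i<k. x $ i = 0}"
proof -
  define F where "F = {x \<in> X. truncate_vec k x = truncate_vec k x0}"
  have Fq: "x \<in> carrier_vec q" if "x \<in> F" for x
    using that X unfolding F_def by blast
  have x0q: "x0 \<in> carrier_vec q" using x0 X by blast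
  have agree: "x $ i = x0 $ i" if "x \<in> F" "i < k" for x i
  proof -
    have "truncate_vec k x $ i = truncate_vec k x0 $ i"
      using that(1) unfolding F_def by simp
    then show ?thesis
      using that(2) Fq[OF that(1)] x0q \<open>k \<le> q\<close> by (simp add: truncate_vec_def)
  qed
  have into: "(\<lambda>x. x + x0) ` F \<subseteq> {x \<in> X. \<forall>i<k. x $ i = 0}"
  proof
    fix z assume "z \<in> (\<lambda>x. x + x0) ` F"
    then obtain x where x: "x \<in> F" and z: "z = x + x0" by blast
    have "z \<in> X" using add x0 x unfolding z F_def by blast
    moreover have "z $ i = 0" if "i < k" for i
      using agree[OF x that] that x0q \<open>k \<le> q\<close> unfolding z by simp
    ultimately show "z \<in> {x \<in> X. \<forall>i<k. x $ i = 0}" by blast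
  qed
  have cancel: "(x + x0) + x0 = x" if "x \<in> F" for x
    using Fq[OF that] x0q by (simp add: assoc_add_vec[of _ q] add_self_vec_bit)
  have "inj_on (\<lambda>x. x + x0) F"
  proof (rule inj_onI)
    fix x y assume x: "x \<in> F" and y: "y \<in> F" and eq: "x + x0 = y + x0"
    have "(x + x0) + x0 = (y + x0) + x0" by (simp only: eq)
    then show "x = y" by (simp only: cancel[OF x] cancel[OF y])
  qed
  moreover have "finite {x \<in> X. \<forall>i<k. x $ i = 0}"
    by (rule finite_subset[OF _ finite_subset[OF X finite_carrier_vec_bit]]) simp
  ultimately show ?thesis
    unfolding F_def[symmetric] by (rule card_inj_on_le[OF _ into])
qed

lemma card_le_pow_mult_card_low_zero:
  fixes X :: "bit vec set"
  assumes X: "X \<subseteq> carrier_vec q" and add: "\<And>x y. x \<in> X \<Longrightarrow> y \<in> X \<Longrightarrow> x + y \<in> X"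
    and "k \<le> q"
  shows "card X \<le> 2 ^ k * card {x \<in> X. \<forall>i<k. x $ i = 0}"
proof -
  define W where "W = {x \<in> X. \<forall>i<k. x $ i = 0}"
  define fibre where "fibre l = {x \<in> X. truncate_vec k x = l}" for l
  have fin: "finite X" using finite_subset[OF X finite_carrier_vec_bit] .
  have "card (truncate_vec k ` X) \<le> 2 ^ card {..<k}"
  proof (rule card_le_if_inj_on_supported_vecs[where f = id])
    show "id ` truncate_vec k ` X \<subseteq> supported_vecs q {..<k}"
      using X by (auto simp: supported_vecs_def truncate_vec_def)
  qed (use \<open>k \<le> q\<close> in auto)
  then have image: "card (truncate_vec k ` X) \<le> 2 ^ k" by simp
  have fibre_le: "card (fibre l) \<le> card W" if l: "l \<in> truncate_vec k ` X" for l
  proof -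
    obtain x0 where "x0 \<in> X" "l = truncate_vec k x0" using l by blast
    then show ?thesis
      unfolding fibre_def W_def using card_truncate_vec_fibre_le[OF X add \<open>k \<le> q\<close>] by simp
  qed
  have "(\<Union>l \<in> truncate_vec k ` X. fibre l) = X" unfolding fibre_def by blast
  moreover have "card (\<Union>l \<in> truncate_vec k ` X. fibre l) \<le> (\<Sum>l \<in> truncate_vec k ` X. card (fibre l))"
    using fin by (intro card_UN_le) simp
  ultimately have "card X \<le> (\<Sum>l \<in> truncate_vec k ` X. card (fibre l))" by simp
  also have "\<dots> \<le> (\<Sum>l \<in> truncate_vec k ` X. card W)"
    by (rule sum_mono) (rule fibre_le)
  also have "\<dots> = card (truncate_vec k ` X) * card W"
    by (simp only: sum_constant of_nat_id)
  also have "\<dots> \<le> 2 ^ k * card W"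
    by (rule mult_le_mono1[OF image])
  finally show ?thesis unfolding W_def .
qed

section \<open>Channel matrices\<close>

lemma mult_mat_vec_carrier_vec_dim_row: "A \<in> carrier_mat n k \<Longrightarrow> A *\<^sub>v v \<in> carrier_vec n"
  by (metis carrier_matD(1) carrier_vec_dim_vec dim_mult_mat_vec)

lemma shift_mat_carrier_mat [simp]: "shift_mat q \<in> carrier_mat q q"
  by (simp add: shift_mat_def)

lemma shift_mat_mult_vec:
  fixes x :: "bit vec"
  assumes "x \<in> carrier_vec q"
  shows "shift_mat q *\<^sub>v x = vec q (\<lambda>i. if 1 \<le> i then x $ (i - 1) else 0)"
proof (rule eq_vecI)
  fix i assume "i < dim_vec (vec q (\<lambda>i. if 1 \<le> i then x $ (i - 1) else 0))"
  then have i: "i < q" by simp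
  have "(shift_mat q *\<^sub>v x) $ i = (\<Sum>j\<in>{0..<q}. (if i = j + 1 then 1 else 0) * x $ j)"
    using assms i by (simp add: shift_mat_def scalar_prod_def)
  also have "\<dots> = (if 1 \<le> i then x $ (i - 1) else 0)"
  proof (cases "i = 0")
    case False
    then have "(\<Sum>j\<in>{0..<q}. (if i = j + 1 then 1 else 0) * x $ j)
        = (\<Sum>j\<in>{0..<q}. if j = i - 1 then x $ j else 0)"
      by (intro sum.cong) auto
    with False i show ?thesis by (simp add: sum.delta')
  qed simp
  finally show "(shift_mat q *\<^sub>v x) $ i = vec q (\<lambda>i. if 1 \<le> i then x $ (i - 1) else 0) $ i"
    using i by simp
qed (simp add: shift_mat_def)

lemma shift_mat_pow_mult_vec:
  fixes x :: "bit vec"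
  assumes "x \<in> carrier_vec q"
  shows "shift_mat q ^\<^sub>m k *\<^sub>v x = vec q (\<lambda>i. if k \<le> i then x $ (i - k) else 0)"
  using assms
proof (induction k arbitrary: x)
  case 0
  then show ?case by (intro eq_vecI) (auto simp: shift_mat_def)
next
  case (Suc k)
  have "shift_mat q ^\<^sub>m Suc k *\<^sub>v x = shift_mat q ^\<^sub>m k *\<^sub>v (shift_mat q *\<^sub>v x)"
    using Suc.prems by (simp add: assoc_mult_mat_vec[of _ q q _ q] del: assoc_mult_mat_vec)
  also have "\<dots> = vec q (\<lambda>i. if Suc k \<le> i then x $ (i - Suc k) else 0)"
    using Suc by (simp add: shift_mat_mult_vec) (auto intro!: eq_vecI)
  finally show ?case .
qed

lemma chan_carrier_mat [simp]: "chan q n \<in> carrier_mat q q"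
  by (simp add: chan_def)

lemma dim_row_chan [simp]: "dim_row (chan q n) = q"
  using carrier_matD[OF chan_carrier_mat] by simp

lemma chan_mult_vec_carrier [simp]: "chan q n *\<^sub>v x \<in> carrier_vec q"
  by (rule mult_mat_vec_carrier_vec_dim_row[OF chan_carrier_mat])

lemma index_chan_mult_vec:
  fixes x :: "bit vec"
  assumes "x \<in> carrier_vec q" "i < q"
  shows "(chan q n *\<^sub>v x) $ i = (if q - n \<le> i then x $ (i - (q - n)) else 0)"
  using assms by (simp add: chan_def shift_mat_pow_mult_vec del: index_mult_mat_vec)

lemma index_chan_mult_vec_level:
  fixes x :: "bit vec"
  assumes "x \<in> carrier_vec q" "n \<le> k" "k \<le> q" "i < k"
  shows "(chan q n *\<^sub>v x) $ (q - k + i) = (if k - n \<le> i then x $ (i - (k - n)) else 0)"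
proof -
  have "q - k + i < q" "(q - n \<le> q - k + i) = (k - n \<le> i)" "q - k + i - (q - n) = i - (k - n)"
    using assms(2-4) by linarith+
  then show ?thesis using index_chan_mult_vec[OF assms(1)] by presburger
qed

lemma chan_mult_truncate_vec:
  fixes x :: "bit vec"
  assumes "x \<in> carrier_vec q" "n \<le> k"
  shows "chan q n *\<^sub>v truncate_vec k x = chan q n *\<^sub>v x"
proof (rule eq_vecI)
  fix i assume "i < dim_vec (chan q n *\<^sub>v x)"
  then have "i < q" by simp
  with assms show "(chan q n *\<^sub>v truncate_vec k x) $ i = (chan q n *\<^sub>v x) $ i"
    by (auto simp: index_chan_mult_vec truncate_vec_def simp del: index_mult_mat_vec)
qed simp

definition shift_down_vec :: "nat \<Rightarrow> 'a :: zero vec \<Rightarrow> 'a vec" where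
  "shift_down_vec s x = vec (dim_vec x) (\<lambda>j. if j + s < dim_vec x then x $ (j + s) else 0)"

lemma chan_mult_shift_down_vec:
  fixes x :: "bit vec"
  assumes "x \<in> carrier_vec q" "m \<le> n" "n \<le> q" "\<And>i. i < n - m \<Longrightarrow> x $ i = 0"
  shows "chan q m *\<^sub>v shift_down_vec (n - m) x = chan q n *\<^sub>v x"
proof (rule eq_vecI)
  fix p assume "p < dim_vec (chan q n *\<^sub>v x)"
  then have "p < q" by simp
  with assms show "(chan q m *\<^sub>v shift_down_vec (n - m) x) $ p = (chan q n *\<^sub>v x) $ p"
    by (cases "q - m \<le> p")
      (simp_all add: index_chan_mult_vec shift_down_vec_def del: index_mult_mat_vec)
qed simp

definition select_mat :: "nat \<Rightarrow> (nat \<Rightarrow> bool) \<Rightarrow> (nat \<Rightarrow> nat) \<Rightarrow> 'a :: semiring_1 mat" where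
  "select_mat q P f = mat q q (\<lambda>(i, j). if P i \<and> j = f i then 1 else 0)"

lemma select_mat_carrier_mat [simp]: "select_mat q P f \<in> carrier_mat q q"
  by (simp add: select_mat_def)

lemma index_select_mat_mult_vec:
  fixes y :: "'a :: semiring_1 vec"
  assumes "y \<in> carrier_vec q" "i < q"
  shows "(select_mat q P f *\<^sub>v y) $ i = (if P i \<and> f i < q then y $ f i else 0)"
proof -
  have "(select_mat q P f *\<^sub>v y) $ i = (\<Sum>j \<in> {0..<q}. (if P i \<and> j = f i then 1 else 0) * y $ j)"
    using assms by (simp add: select_mat_def scalar_prod_def)
  also have "\<dots> = (\<Sum>j \<in> {0..<q}. if j = f i then (if P i then y $ j else 0) else 0)"
    by (rule sum.cong) auto
  also have "\<dots> = (if P i \<and> f i < q then y $ f i else 0)"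
    by (simp add: sum.delta')
  finally show ?thesis .
qed

section \<open>The output at the destination\<close>

definition dest_output :: "nat \<Rightarrow> nat \<Rightarrow> nat \<Rightarrow> nat \<Rightarrow> nat \<Rightarrow> nat \<Rightarrow> bit mat \<Rightarrow> bit mat \<Rightarrow>
    bit vec \<Rightarrow> bit vec \<Rightarrow> bit vec" where
  "dest_output q n1 n2 n3 n4 m GA GB xS xM =
     chan q n3 *\<^sub>v (GA *\<^sub>v (chan q n1 *\<^sub>v xS + chan q m *\<^sub>v xM)) +
     chan q n4 *\<^sub>v (GB *\<^sub>v (chan q n2 *\<^sub>v xS + chan q m *\<^sub>v xM))"

lemma dest_output_carrier_vec [simp]: "dest_output q n1 n2 n3 n4 m GA GB xS xM \<in> carrier_vec q"
  by (simp add: dest_output_def)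

lemma mult_mult_mat_vec:
  assumes "A \<in> carrier_mat n n" "B \<in> carrier_mat n n" "C \<in> carrier_mat n n" "x \<in> carrier_vec n"
  shows "(A * B * C) *\<^sub>v x = A *\<^sub>v (B *\<^sub>v (C *\<^sub>v x))"
  using assms by (simp add: assoc_mult_mat_vec[of _ n n _ n])

lemma add_add_add_comm_vec:
  fixes a b c d :: "'a :: comm_monoid_add vec"
  assumes "a \<in> carrier_vec n" "b \<in> carrier_vec n" "c \<in> carrier_vec n" "d \<in> carrier_vec n"
  shows "(a + b) + (c + d) = (a + c) + (b + d)"
  using assms by (intro eq_vecI) (simp_all add: ac_simps)

lemma G_S_mult_vec_add_G_M_mult_vec:
  assumes q: "q = net_q n1 n2 n3 n4 m"
    and GA: "GA \<in> carrier_mat q q" and GB: "GB \<in> carrier_mat q q"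
    and xS: "xS \<in> carrier_vec q" and xM: "xM \<in> carrier_vec q"
  shows "G_S n1 n2 n3 n4 m GA GB *\<^sub>v xS + G_M n1 n2 n3 n4 m GA GB *\<^sub>v xM
       = dest_output q n1 n2 n3 n4 m GA GB xS xM"
proof -
  let ?C = "chan q"
  have carrier: "?C a * G * ?C b \<in> carrier_mat q q" if "G \<in> carrier_mat q q" for a b G
    using that by (metis chan_carrier_mat mult_carrier_mat)
  have S: "G_S n1 n2 n3 n4 m GA GB *\<^sub>v xS
      = ?C n3 *\<^sub>v (GA *\<^sub>v (?C n1 *\<^sub>v xS)) + ?C n4 *\<^sub>v (GB *\<^sub>v (?C n2 *\<^sub>v xS))"
    unfolding G_S_def Let_def q[symmetric]
    by (simp only: add_mult_distrib_mat_vec[OF carrier[OF GA] carrier[OF GB] xS]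
        mult_mult_mat_vec[OF chan_carrier_mat GA chan_carrier_mat xS]
        mult_mult_mat_vec[OF chan_carrier_mat GB chan_carrier_mat xS])
  have M: "G_M n1 n2 n3 n4 m GA GB *\<^sub>v xM
      = ?C n3 *\<^sub>v (GA *\<^sub>v (?C m *\<^sub>v xM)) + ?C n4 *\<^sub>v (GB *\<^sub>v (?C m *\<^sub>v xM))"
    unfolding G_M_def Let_def q[symmetric]
    by (simp only: add_mult_distrib_mat_vec[OF carrier[OF GA] carrier[OF GB] xM]
        mult_mult_mat_vec[OF chan_carrier_mat GA chan_carrier_mat xM]
        mult_mult_mat_vec[OF chan_carrier_mat GB chan_carrier_mat xM])
  have "dest_output q n1 n2 n3 n4 m GA GB xS xM
      = (?C n3 *\<^sub>v (GA *\<^sub>v (?C n1 *\<^sub>v xS)) + ?C n3 *\<^sub>v (GA *\<^sub>v (?C m *\<^sub>v xM)))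
      + (?C n4 *\<^sub>v (GB *\<^sub>v (?C n2 *\<^sub>v xS)) + ?C n4 *\<^sub>v (GB *\<^sub>v (?C m *\<^sub>v xM)))"
    unfolding dest_output_def using GA GB
    by (simp add: mult_add_distrib_mat_vec[of _ q q] mult_mat_vec_carrier_vec_dim_row)
  also have "\<dots> = G_S n1 n2 n3 n4 m GA GB *\<^sub>v xS + G_M n1 n2 n3 n4 m GA GB *\<^sub>v xM"
    unfolding S M using GA GB
    by (intro add_add_add_comm_vec[of _ q]) (simp_all add: mult_mat_vec_carrier_vec_dim_row)
  finally show ?thesis by (rule sym)
qed

definition decodes :: "nat \<Rightarrow> ('a vec \<Rightarrow> 'a vec \<Rightarrow> 'b) \<Rightarrow> 'a vec set \<Rightarrow> bool" where
  "decodes q y X \<longleftrightarrow>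
     (\<forall>xS \<in> X. \<forall>xS' \<in> X. \<forall>xM \<in> carrier_vec q. \<forall>xM' \<in> carrier_vec q.
        y xS xM = y xS' xM' \<longrightarrow> xS = xS')"

lemma decodesD:
  "decodes q y X \<Longrightarrow> xS \<in> X \<Longrightarrow> xS' \<in> X \<Longrightarrow> xM \<in> carrier_vec q \<Longrightarrow> xM' \<in> carrier_vec q
    \<Longrightarrow> y xS xM = y xS' xM' \<Longrightarrow> xS = xS'"
  unfolding decodes_def by blast

lemma decodes_subset: "decodes q y X \<Longrightarrow> W \<subseteq> X \<Longrightarrow> decodes q y W"
  unfolding decodes_def by blast

lemma decodable_iff_decodes_dest_output:
  assumes "q = net_q n1 n2 n3 n4 m"
    and "GA \<in> carrier_mat q q" "GB \<in> carrier_mat q q" "X \<subseteq> carrier_vec q"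
  shows "decodable q (G_S n1 n2 n3 n4 m GA GB) (G_M n1 n2 n3 n4 m GA GB) X
     \<longleftrightarrow> decodes q (dest_output q n1 n2 n3 n4 m GA GB) X"
proof -
  have "G_S n1 n2 n3 n4 m GA GB *\<^sub>v xS + G_M n1 n2 n3 n4 m GA GB *\<^sub>v xM
      = dest_output q n1 n2 n3 n4 m GA GB xS xM" if "xS \<in> X" "xM \<in> carrier_vec q" for xS xM
    using that assms(4) by (intro G_S_mult_vec_add_G_M_mult_vec[OF assms(1-3)]) auto
  then show ?thesis
    unfolding decodable_def decodes_def by (simp cong: ball_cong)
qed

section \<open>Converse\<close>

lemma card_le_if_decodes_into_supported_vecs:
  fixes X :: "bit vec set" and y :: "bit vec \<Rightarrow> bit vec \<Rightarrow> bit vec"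
  assumes "decodes q y X" "\<And>x. x \<in> X \<Longrightarrow> f x \<in> carrier_vec q"
    and "\<And>x. x \<in> X \<Longrightarrow> y x (f x) \<in> supported_vecs q S" "S \<subseteq> {..<q}"
  shows "card X \<le> 2 ^ card S"
proof (rule card_le_if_inj_on_supported_vecs[where f = "\<lambda>x. y x (f x)"])
  show "inj_on (\<lambda>x. y x (f x)) X"
    by (rule inj_onI) (use decodesD[OF assms(1)] assms(2) in blast)
qed (use assms(3,4) in auto)

lemma dest_output_eq_zero_below:
  assumes "GA \<in> carrier_mat q q" "GB \<in> carrier_mat q q" "n4 \<le> n3" "p < q - n3"
  shows "dest_output q n1 n2 n3 n4 m GA GB xS xM $ p = 0"
proof -
  have "p < q" using assms(4) by simp
  with assms show ?thesis
    by (simp add: dest_output_def index_chan_mult_vec mult_mat_vec_carrier_vec_dim_row[of _ q q]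
        del: index_mult_mat_vec)
qed

lemma card_le_pow_n3_if_decodes:
  assumes "GA \<in> carrier_mat q q" "GB \<in> carrier_mat q q" "n4 \<le> n3" "n3 \<le> q"
    and "decodes q (dest_output q n1 n2 n3 n4 m GA GB) X"
  shows "card X \<le> 2 ^ n3"
proof -
  have "card X \<le> 2 ^ card {q - n3..<q}"
    by (rule card_le_if_decodes_into_supported_vecs[OF assms(5), where f = "\<lambda>_. 0\<^sub>v q"])
       (use assms(1-3) in \<open>auto simp: supported_vecs_def dest_output_eq_zero_below\<close>)
  then show ?thesis using assms(4) by simp
qed

lemma dest_output_truncate_vec:
  assumes "xS \<in> carrier_vec q" "n2 \<le> n1"
  shows "dest_output q n1 n2 n3 n4 m GA GB (truncate_vec n1 xS) xM
       = dest_output q n1 n2 n3 n4 m GA GB xS xM"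
  using assms by (simp add: dest_output_def chan_mult_truncate_vec)

lemma dest_output_jammed_eq_zero_below:
  assumes "GA \<in> carrier_mat q q" "GB \<in> carrier_mat q q" "x \<in> carrier_vec q"
    and "m \<le> n1" "n1 \<le> q" "\<And>i. i < n1 - m \<Longrightarrow> x $ i = 0" "p < q - n4"
  shows "dest_output q n1 n2 n3 n4 m GA GB x (shift_down_vec (n1 - m) x) $ p = 0"
proof -
  have "chan q n1 *\<^sub>v x + chan q m *\<^sub>v shift_down_vec (n1 - m) x = 0\<^sub>v q"
    using chan_mult_shift_down_vec[OF assms(3-6)] add_self_vec_bit by simp
  moreover have "GA *\<^sub>v 0\<^sub>v q = 0\<^sub>v q"
    using assms(1) by (intro eq_vecI) auto
  ultimately show ?thesis
    using assms(1,2,7)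
    by (simp add: dest_output_def index_chan_mult_vec mult_mat_vec_carrier_vec_dim_row
        del: index_mult_mat_vec)
qed

lemma card_le_pow_m_if_decodes_low_zero:
  assumes le: "n2 \<le> n1" "m \<le> n1" "n1 \<le> q"
    and X: "X \<subseteq> carrier_vec q" and low: "\<And>x i. x \<in> X \<Longrightarrow> i < n1 - m \<Longrightarrow> x $ i = 0"
    and dec: "decodes q (dest_output q n1 n2 n3 n4 m GA GB) X"
  shows "card X \<le> 2 ^ m"
proof -
  let ?y = "dest_output q n1 n2 n3 n4 m GA GB"
  have Xq: "x \<in> carrier_vec q" if "x \<in> X" for x
    using that X by blast
  have "card X \<le> 2 ^ card {n1 - m..<n1}"
  proof (rule card_le_if_inj_on_supported_vecs[where f = "truncate_vec n1"])
    show "inj_on (truncate_vec n1) X"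
    proof (rule inj_onI)
      fix x x' assume x: "x \<in> X" and x': "x' \<in> X" and eq: "truncate_vec n1 x = truncate_vec n1 x'"
      have "?y x (0\<^sub>v q) = ?y (truncate_vec n1 x) (0\<^sub>v q)"
        by (rule dest_output_truncate_vec[OF Xq[OF x] le(1), symmetric])
      also have "\<dots> = ?y x' (0\<^sub>v q)"
        unfolding eq by (rule dest_output_truncate_vec[OF Xq[OF x'] le(1)])
      finally show "x = x'"
        by (rule decodesD[OF dec x x' zero_carrier_vec zero_carrier_vec])
    qed
    show "truncate_vec n1 ` X \<subseteq> supported_vecs q {n1 - m..<n1}"
    proof
      fix v assume "v \<in> truncate_vec n1 ` X"
      then obtain x where x: "x \<in> X" and v: "v = truncate_vec n1 x" by blast
      show "v \<in> supported_vecs q {n1 - m..<n1}"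
        using Xq[OF x] low[OF x] unfolding v by (auto simp: supported_vecs_def truncate_vec_def)
    qed
  qed (use le in auto)
  then show ?thesis using le by simp
qed

lemma card_le_pow_n4_if_decodes_low_zero:
  assumes GA: "GA \<in> carrier_mat q q" and GB: "GB \<in> carrier_mat q q"
    and le: "m \<le> n1" "n1 \<le> q" "n4 \<le> q"
    and X: "X \<subseteq> carrier_vec q" and low: "\<And>x i. x \<in> X \<Longrightarrow> i < n1 - m \<Longrightarrow> x $ i = 0"
    and dec: "decodes q (dest_output q n1 n2 n3 n4 m GA GB) X"
  shows "card X \<le> 2 ^ n4"
proof -
  have Xq: "x \<in> carrier_vec q" if "x \<in> X" for x
    using that X by blast
  have "card X \<le> 2 ^ card {q - n4..<q}"
  proof (rule card_le_if_decodes_into_supported_vecs[OF dec, where f = "shift_down_vec (n1 - m)"])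
    show "shift_down_vec (n1 - m) x \<in> carrier_vec q" if "x \<in> X" for x
      using Xq[OF that] by (simp add: shift_down_vec_def)
    show "dest_output q n1 n2 n3 n4 m GA GB x (shift_down_vec (n1 - m) x) \<in> supported_vecs q {q - n4..<q}"
      if "x \<in> X" for x
      using dest_output_jammed_eq_zero_below[OF GA GB Xq[OF that] le(1,2) low[OF that]]
      by (auto simp: supported_vecs_def)
  qed auto
  then show ?thesis using le by simp
qed

lemma card_le_pow_n1_minus_m_if_decodes:
  assumes GA: "GA \<in> carrier_mat q q" and GB: "GB \<in> carrier_mat q q"
    and le: "n2 \<le> n1" "m \<le> n1" "n1 \<le> q" "n4 \<le> q"
    and X: "X \<subseteq> carrier_vec q" and add: "\<And>x y. x \<in> X \<Longrightarrow> y \<in> X \<Longrightarrow> x + y \<in> X"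
    and dec: "decodes q (dest_output q n1 n2 n3 n4 m GA GB) X"
  shows "card X \<le> 2 ^ (n1 - m + min m n4)"
proof -
  define W where "W = {x \<in> X. \<forall>i<n1 - m. x $ i = 0}"
  have W: "W \<subseteq> X" "W \<subseteq> carrier_vec q" using X by (auto simp: W_def)
  have low: "x $ i = 0" if "x \<in> W" "i < n1 - m" for x i
    using that by (simp add: W_def)
  have decW: "decodes q (dest_output q n1 n2 n3 n4 m GA GB) W"
    by (rule decodes_subset[OF dec W(1)])
  have "card W \<le> 2 ^ min m n4"
    using card_le_pow_m_if_decodes_low_zero[OF le(1-3) W(2) low decW]
      card_le_pow_n4_if_decodes_low_zero[OF GA GB le(2-4) W(2) low decW]
    by (simp add: min_def)
  moreover have "card X \<le> 2 ^ (n1 - m) * card W"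
    unfolding W_def using card_le_pow_mult_card_low_zero[OF X add] le by simp
  ultimately have "card X \<le> 2 ^ (n1 - m) * 2 ^ min m n4"
    by (meson le_trans mult_le_mono2)
  then show ?thesis by (simp add: power_add)
qed

section \<open>Achievability\<close>

text \<open>Relay A moves level q - n1 + i of its input to level q - B + i at the destination; relay B
  does the same only for i \<ge> n1 - m, the levels at which the disturbance enters relay A.\<close>

definition relay_A :: "nat \<Rightarrow> nat \<Rightarrow> nat \<Rightarrow> nat \<Rightarrow> bit mat" where
  "relay_A q n1 n3 B = select_mat q (\<lambda>t. n3 - B \<le> t) (\<lambda>t. t + (q - n3) - (n1 - B))"

definition relay_B :: "nat \<Rightarrow> nat \<Rightarrow> nat \<Rightarrow> nat \<Rightarrow> nat \<Rightarrow> bit mat" where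
  "relay_B q n1 n4 m B =
     select_mat q (\<lambda>t. q - B + (n1 - m) \<le> t + (q - n4)) (\<lambda>t. t + (q - n4) - (n1 - B))"

lemma relay_A_carrier_mat [simp]: "relay_A q n1 n3 B \<in> carrier_mat q q"
  and relay_B_carrier_mat [simp]: "relay_B q n1 n4 m B \<in> carrier_mat q q"
  by (simp_all add: relay_A_def relay_B_def)

lemma relay_A_entry:
  fixes y :: "bit vec"
  assumes "y \<in> carrier_vec q" "B \<le> n3" "n3 \<le> q" "B \<le> n1" "n1 \<le> q" "i < B"
  shows "(chan q n3 *\<^sub>v (relay_A q n1 n3 B *\<^sub>v y)) $ (q - B + i) = y $ (q - n1 + i)"
proof -
  define t where "t = q - B + i - (q - n3)"
  have t: "t < q" "n3 - B \<le> t" "t + (q - n3) - (n1 - B) = q - n1 + i" "q - n1 + i < q"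
    and p: "q - B + i < q" "q - n3 \<le> q - B + i"
    using assms(2-6) unfolding t_def by linarith+
  have "(chan q n3 *\<^sub>v (relay_A q n1 n3 B *\<^sub>v y)) $ (q - B + i) = (relay_A q n1 n3 B *\<^sub>v y) $ t"
    using index_chan_mult_vec[OF mult_mat_vec_carrier_vec_dim_row p(1), of "relay_A q n1 n3 B" q n3 y]
      p(2) unfolding t_def by (simp add: relay_A_def)
  also have "\<dots> = y $ (q - n1 + i)"
    using index_select_mat_mult_vec[OF assms(1) t(1)] t(2-4) by (simp add: relay_A_def)
  finally show ?thesis .
qed

lemma relay_B_entry:
  fixes y :: "bit vec"
  assumes "y \<in> carrier_vec q" "n4 \<le> q" "B \<le> n1 - m + n4" "B \<le> n1" "n1 \<le> q" "m \<le> n1" "i < B"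
  shows "(chan q n4 *\<^sub>v (relay_B q n1 n4 m B *\<^sub>v y)) $ (q - B + i)
       = (if n1 - m \<le> i then y $ (q - n1 + i) else 0)"
proof (cases "q - n4 \<le> q - B + i")
  case True
  define t where "t = q - B + i - (q - n4)"
  have t: "t < q" "(q - B + (n1 - m) \<le> t + (q - n4)) = (n1 - m \<le> i)"
      "t + (q - n4) - (n1 - B) = q - n1 + i" "q - n1 + i < q"
    and p: "q - B + i < q"
    using assms(2-7) True unfolding t_def by linarith+
  have "(chan q n4 *\<^sub>v (relay_B q n1 n4 m B *\<^sub>v y)) $ (q - B + i) = (relay_B q n1 n4 m B *\<^sub>v y) $ t"
    using index_chan_mult_vec[OF mult_mat_vec_carrier_vec_dim_row p, of "relay_B q n1 n4 m B" q n4 y]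
      True unfolding t_def by (simp add: relay_B_def)
  also have "\<dots> = (if n1 - m \<le> i then y $ (q - n1 + i) else 0)"
    using index_select_mat_mult_vec[OF assms(1) t(1)] t(2-4) by (simp add: relay_B_def)
  finally show ?thesis .
next
  case False
  then have "\<not> n1 - m \<le> i" "q - B + i < q"
    using assms(3,7) by linarith+
  with False show ?thesis
    using index_chan_mult_vec[OF mult_mat_vec_carrier_vec_dim_row, of "relay_B q n1 n4 m B" q q]
    by (simp add: relay_B_def)
qed

lemma dest_output_relay_entry:
  fixes xS xM :: "bit vec"
  assumes xS: "xS \<in> carrier_vec q" and xM: "xM \<in> carrier_vec q"
    and le: "n2 \<le> n1" "m \<le> n1" "n1 \<le> q" "n3 \<le> q" "n4 \<le> q"
    and B: "B \<le> n3" "B \<le> n1 - m + n4" "B \<le> n1" and i: "i < B"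
  shows "dest_output q n1 n2 n3 n4 m (relay_A q n1 n3 B) (relay_B q n1 n4 m B) xS xM $ (q - B + i)
       = xS $ i + (if n1 - m \<le> i \<and> n1 - n2 \<le> i then xS $ (i - (n1 - n2)) else 0)"
proof -
  define yA where "yA = chan q n1 *\<^sub>v xS + chan q m *\<^sub>v xM"
  define yB where "yB = chan q n2 *\<^sub>v xS + chan q m *\<^sub>v xM"
  define jam where "jam = (if n1 - m \<le> i then xM $ (i - (n1 - m)) else 0)"
  have iq: "i < n1" "q - n1 + i < q" "q - B + i < q" using i B le by linarith+
  have yA: "yA \<in> carrier_vec q" "yA $ (q - n1 + i) = xS $ i + jam"
    using index_chan_mult_vec_level[OF xS order_refl le(3) iq(1)]
      index_chan_mult_vec_level[OF xM le(2,3) iq(1)] iq(2)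
    unfolding yA_def jam_def by simp_all
  have yB: "yB \<in> carrier_vec q"
      "yB $ (q - n1 + i) = (if n1 - n2 \<le> i then xS $ (i - (n1 - n2)) else 0) + jam"
    using index_chan_mult_vec_level[OF xS le(1,3) iq(1)]
      index_chan_mult_vec_level[OF xM le(2,3) iq(1)] iq(2)
    unfolding yB_def jam_def by simp_all
  have "dest_output q n1 n2 n3 n4 m (relay_A q n1 n3 B) (relay_B q n1 n4 m B) xS xM $ (q - B + i)
      = yA $ (q - n1 + i) + (if n1 - m \<le> i then yB $ (q - n1 + i) else 0)"
    using relay_A_entry[OF yA(1) B(1) le(4) B(3) le(3) i] relay_B_entry[OF yB(1) le(5) B(2,3) le(3,2) i]
      iq(3) unfolding dest_output_def yA_def yB_def by (simp del: index_mult_mat_vec)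
  also have "\<dots> = xS $ i + (if n1 - m \<le> i \<and> n1 - n2 \<le> i then xS $ (i - (n1 - n2)) else 0)"
    unfolding yA(2) yB(2) jam_def by (cases "n1 - m \<le> i")
      (simp_all only: bit_add_add_cancel if_True if_False simp_thms add_0_right)
  finally show ?thesis .
qed

lemma index_eq_if_shear_eq:
  fixes x y :: "'a :: cancel_comm_monoid_add vec"
  assumes "0 < d"
    and eq: "\<And>i. i < B \<Longrightarrow> x $ i + (if P i \<and> d \<le> i then x $ (i - d) else 0)
                           = y $ i + (if P i \<and> d \<le> i then y $ (i - d) else 0)"
  shows "i < B \<Longrightarrow> x $ i = y $ i"
proof (induction i rule: less_induct)
  case (less i)
  have "(if P i \<and> d \<le> i then x $ (i - d) else 0) = (if P i \<and> d \<le> i then y $ (i - d) else 0)"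
    using less.IH[of "i - d"] less.prems assms(1) by auto
  then show ?case using eq[OF less.prems] by simp
qed

lemma decodes_relay:
  assumes le: "n2 < n1" "m \<le> n1" "n1 \<le> q" "n3 \<le> q" "n4 \<le> q"
    and B: "B \<le> n3" "B \<le> n1 - m + n4" "B \<le> n1"
  shows "decodes q (dest_output q n1 n2 n3 n4 m (relay_A q n1 n3 B) (relay_B q n1 n4 m B))
           (supported_vecs q {..<B})"
  unfolding decodes_def
proof (intro ballI impI)
  let ?y = "dest_output q n1 n2 n3 n4 m (relay_A q n1 n3 B) (relay_B q n1 n4 m B)"
  fix xS xS' xM xM'
  assume xS: "xS \<in> supported_vecs q {..<B}" and xS': "xS' \<in> supported_vecs q {..<B}"
    and xM: "xM \<in> carrier_vec q" and xM': "xM' \<in> carrier_vec q" and eq: "?y xS xM = ?y xS' xM'"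
  have q: "xS \<in> carrier_vec q" "xS' \<in> carrier_vec q"
    using xS xS' by (simp_all add: supported_vecs_def)
  have low: "xS $ i = xS' $ i" if "i < B" for i
  proof (rule index_eq_if_shear_eq[where d = "n1 - n2" and P = "\<lambda>i. n1 - m \<le> i"])
    fix i assume "i < B"
    then show "xS $ i + (if n1 - m \<le> i \<and> n1 - n2 \<le> i then xS $ (i - (n1 - n2)) else 0)
             = xS' $ i + (if n1 - m \<le> i \<and> n1 - n2 \<le> i then xS' $ (i - (n1 - n2)) else 0)"
      using dest_output_relay_entry[OF q(1) xM] dest_output_relay_entry[OF q(2) xM'] le B eq
      by (metis less_imp_le)
  qed (use le that in auto)
  show "xS = xS'"
  proof (rule eq_vecI)
    fix i assume "i < dim_vec xS'"
    then show "xS $ i = xS' $ i"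
      using low xS xS' q by (cases "i < B") (auto simp: supported_vecs_def)
  qed (use q in simp)
qed

lemma achievable_dim_le:
  assumes "n2 < n1" "n4 \<le> n3" "m \<le> n1"
    and q: "q = net_q n1 n2 n3 n4 m" and GA: "GA \<in> carrier_mat q q" and GB: "GB \<in> carrier_mat q q"
    and d: "d \<in> achievable_dims n1 n2 n3 n4 m GA GB"
  shows "d \<le> min (n1 - m + min m n4) n3"
proof -
  have le: "n1 \<le> q" "n3 \<le> q" "n4 \<le> q" by (simp_all add: q net_q_def)
  obtain X where sub: "subspace class_ring X (module_vec TYPE(bit) q)"
    and dim: "vectorspace.dim class_ring ((module_vec TYPE(bit) q)\<lparr>carrier := X\<rparr>) = d"
    and dec: "decodable q (G_S n1 n2 n3 n4 m GA GB) (G_M n1 n2 n3 n4 m GA GB) X"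
    using d unfolding achievable_dims_def Let_def q[symmetric] by auto
  have sm: "submodule class_ring X (module_vec TYPE(bit) q)"
    using sub by (simp add: subspace_def)
  have X: "X \<subseteq> carrier_vec q"
    using submodule.subset[OF sm] by (simp add: module_vec_simps)
  have add: "x + y \<in> X" if "x \<in> X" "y \<in> X" for x y
    using submodule.m_closed[OF sm that] by (simp add: module_vec_simps)
  have decodes: "decodes q (dest_output q n1 n2 n3 n4 m GA GB) X"
    using dec decodable_iff_decodes_dest_output[OF q GA GB X] by simp
  have card: "card X = 2 ^ d"
    using card_subspace_vec_bit[OF sub] dim by simp
  have "card X \<le> 2 ^ n3"
    by (rule card_le_pow_n3_if_decodes[OF GA GB assms(2) le(2) decodes])
  moreover have "card X \<le> 2 ^ (n1 - m + min m n4)"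
    by (rule card_le_pow_n1_minus_m_if_decodes[OF GA GB _ assms(3) le(1,3) X add decodes])
      (use assms(1) in simp)
  ultimately show ?thesis
    unfolding card by simp
qed

lemma zero_mem_achievable_dims:
  assumes q: "q = net_q n1 n2 n3 n4 m" and GA: "GA \<in> carrier_mat q q" and GB: "GB \<in> carrier_mat q q"
  shows "0 \<in> achievable_dims n1 n2 n3 n4 m GA GB"
proof -
  have X: "supported_vecs q {} \<subseteq> (carrier_vec q :: bit vec set)"
    by (auto simp: supported_vecs_def)
  have "decodes q (dest_output q n1 n2 n3 n4 m GA GB) (supported_vecs q {})"
    unfolding decodes_def by (auto simp: supported_vecs_def intro!: eq_vecI)
  then have "decodable q (G_S n1 n2 n3 n4 m GA GB) (G_M n1 n2 n3 n4 m GA GB) (supported_vecs q {})"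
    using decodable_iff_decodes_dest_output[OF q GA GB X] by simp
  then show ?thesis
    unfolding achievable_dims_def Let_def q[symmetric]
    using supported_vecs_subspace dim_supported_vecs_bit[of "{}" q] by fastforce
qed

lemma relay_mem_achievable_dims:
  assumes "n2 < n1" "n4 \<le> n3" "m \<le> n1"
    and q: "q = net_q n1 n2 n3 n4 m" and B: "B = min (n1 - m + min m n4) n3"
  shows "B \<in> achievable_dims n1 n2 n3 n4 m (relay_A q n1 n3 B) (relay_B q n1 n4 m B)"
proof -
  have le: "n1 \<le> q" "n3 \<le> q" "n4 \<le> q" by (simp_all add: q net_q_def)
  have "B \<le> n3" "B \<le> n1 - m + n4" "B \<le> n1" "B \<le> q"
    using assms(3) le unfolding B by auto
  have X: "supported_vecs q {..<B} \<subseteq> (carrier_vec q :: bit vec set)"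
    by (auto simp: supported_vecs_def)
  have "decodes q (dest_output q n1 n2 n3 n4 m (relay_A q n1 n3 B) (relay_B q n1 n4 m B))
      (supported_vecs q {..<B})"
    by (rule decodes_relay) (use assms(1,3) le \<open>B \<le> n3\<close> \<open>B \<le> n1 - m + n4\<close> \<open>B \<le> n1\<close> in auto)
  then have "decodable q (G_S n1 n2 n3 n4 m (relay_A q n1 n3 B) (relay_B q n1 n4 m B))
      (G_M n1 n2 n3 n4 m (relay_A q n1 n3 B) (relay_B q n1 n4 m B)) (supported_vecs q {..<B})"
    using decodable_iff_decodes_dest_output[OF q relay_A_carrier_mat relay_B_carrier_mat X] by simp
  moreover have "vectorspace.dim class_ring
      ((module_vec TYPE(bit) q)\<lparr>carrier := supported_vecs q {..<B}\<rparr>) = B"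
    using dim_supported_vecs_bit[of "{..<B}" q] \<open>B \<le> q\<close> by simp
  ultimately show ?thesis
    unfolding achievable_dims_def Let_def q[symmetric]
    using supported_vecs_subspace by blast
qed

lemma finite_achievable_dims:
  assumes "n2 < n1" "n4 \<le> n3" "m \<le> n1"
    and q: "q = net_q n1 n2 n3 n4 m" and "GA \<in> carrier_mat q q" "GB \<in> carrier_mat q q"
  shows "finite (achievable_dims n1 n2 n3 n4 m GA GB)"
  by (rule finite_subset[of _ "{..min (n1 - m + min m n4) n3}"])
    (use achievable_dim_le[OF assms] in auto)

lemma rate_le:
  assumes "n2 < n1" "n4 \<le> n3" "m \<le> n1"
    and q: "q = net_q n1 n2 n3 n4 m" and "GA \<in> carrier_mat q q" "GB \<in> carrier_mat q q"
  shows "rate n1 n2 n3 n4 m GA GB \<le> min (n1 - m + min m n4) n3"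
  unfolding rate_def
  using finite_achievable_dims[OF assms] zero_mem_achievable_dims[OF assms(4-6)]
    achievable_dim_le[OF assms]
  by (intro Max.boundedI) auto

lemma rate_relay:
  assumes "n2 < n1" "n4 \<le> n3" "m \<le> n1"
    and q: "q = net_q n1 n2 n3 n4 m" and B: "B = min (n1 - m + min m n4) n3"
  shows "rate n1 n2 n3 n4 m (relay_A q n1 n3 B) (relay_B q n1 n4 m B) = B"
  unfolding rate_def
proof (rule Max_eqI)
  show "finite (achievable_dims n1 n2 n3 n4 m (relay_A q n1 n3 B) (relay_B q n1 n4 m B))"
    by (rule finite_achievable_dims[OF assms(1-4)]) simp_all
  show "d \<le> B" if "d \<in> achievable_dims n1 n2 n3 n4 m (relay_A q n1 n3 B) (relay_B q n1 n4 m B)" for d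
    unfolding B by (rule achievable_dim_le[OF assms(1-4) _ _ that]) simp_all
qed (rule relay_mem_achievable_dims[OF assms])

theorem mainTheorem4:
  fixes n1 n2 n3 n4 m :: nat
  assumes "n1 > n2" and "n3 \<ge> n4" and "m \<le> n1"
  shows "linear_capacity n1 n2 n3 n4 m = min (n1 - m + min m n4) n3"
proof -
  define q where "q = net_q n1 n2 n3 n4 m"
  define C where "C = min (n1 - m + min m n4) n3"
  let ?rates = "{rate n1 n2 n3 n4 m GA GB | GA GB. GA \<in> carrier_mat q q \<and> GB \<in> carrier_mat q q}"
  have "linear_capacity n1 n2 n3 n4 m = Max ?rates"
    unfolding linear_capacity_def Let_def q_def ..
  also have "\<dots> = C"
  proof (rule Max_eqI)
    show "finite ?rates"
      by (rule finite_subset[of _ "{..C}"]) (use rate_le[OF assms q_def] in \<open>auto simp: C_def\<close>)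
    show "r \<le> C" if "r \<in> ?rates" for r
      using that rate_le[OF assms q_def] unfolding C_def by auto
    show "C \<in> ?rates"
      by (intro CollectI exI[of _ "relay_A q n1 n3 C"] exI[of _ "relay_B q n1 n4 m C"] conjI
          rate_relay[OF assms q_def C_def, symmetric] relay_A_carrier_mat relay_B_carrier_mat)
  qed
  finally show ?thesis unfolding C_def .
qed

end
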